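(* Assume $\mu(\partial A)=0$ for every $\sigma$-invariant probability measure $\mu$. Then for every $v>0$ there exists $M=M(v)$ such that for every $m\ge M$, $$\Phi_{\mathcal{D}_m}(v):=\lim_{n\to\infty}\frac1n\log\mu_\phi\left\{\frac{r_{\mathcal{D}_m}^n}{n}\le v\right\}=-\infty.$$
   Context: $(\Sigma,\sigma)$ is a two-sided mixing subshift of finite type on $\{1,\dots,N\}$, $\phi:\Sigma\to\mathbb{R}$ Hölder continuous with unique equilibrium state $\mu_\phi$. $A\subset\Sigma$ is an open set, $\partial A=\overline A\cap\overline{\Sigma\setminus A}$. An $m$-cylinder is $\{x:x_j=i_j,\ -m\le j\le m\}$; $\mathcal{B}_m$ (resp. $\mathcal{C}_m$) is the largest (resp. smallest) union of $m$-cylinders contained in (resp. containing) $A$; $\mathcal{D}_m=\mathcal{C}_m\setminus\mathcal{B}_m$. For $D\subset\Sigma$, $r_D(x)$ is the smallest integer $n\ge1$ with $\sigma^nx\in D$ ($+\infty$ if none), $r_D^1=r_D$, $r_D^{n+1}=r_D^n+r_D\circ\sigma^{r_D^n}$. The claim includes that the limit exists and equals $-\infty$. *)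

theory Defs
  imports "HOL-Probability.Probability"
begin

text \<open>Points of the full shift: bi-infinite sequences int => nat, with the product
 (Tychonoff) topology on int => nat (nat carries the discrete topology).\<close>

type_synonym seq = "int \<Rightarrow> nat"

definition shift :: "seq \<Rightarrow> seq" where
  "shift x = (\<lambda>j. x (j + 1))"

definition SFT :: "nat \<Rightarrow> (nat \<Rightarrow> nat \<Rightarrow> bool) \<Rightarrow> seq set" where
  "SFT N T = {x. \<forall>j. x j \<in> {1..N} \<and> T (x j) (x (j + 1))}"

text \<open>Mixing (T primitive): some power T^n, and hence all larger ones, is positive.\<close>
definition mixing_matrix :: "nat \<Rightarrow> (nat \<Rightarrow> nat \<Rightarrow> bool) \<Rightarrow> bool" where
  "mixing_matrix N T \<longleftrightarrow> (\<exists>K. \<forall>a\<in>{1..N}. \<forall>b\<in>{1..N}. \<forall>n\<ge>K.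
     \<exists>w::nat \<Rightarrow> nat. w 0 = a \<and> w n = b \<and> (\<forall>k\<le>n. w k \<in> {1..N})
        \<and> (\<forall>k<n. T (w k) (w (k + 1))))"

definition sdist :: "seq \<Rightarrow> seq \<Rightarrow> real" where
  "sdist x y = (if x = y then 0
     else 2 powr (- real (LEAST n::nat. \<exists>j. nat \<bar>j\<bar> = n \<and> x j \<noteq> y j)))"

definition holder_on :: "seq set \<Rightarrow> (seq \<Rightarrow> real) \<Rightarrow> bool" where
  "holder_on S \<phi> \<longleftrightarrow> (\<exists>C \<alpha>. \<alpha> > 0 \<and>
     (\<forall>x\<in>S. \<forall>y\<in>S. \<bar>\<phi> x - \<phi> y\<bar> \<le> C * sdist x y powr \<alpha>))"

definition borel_prob_on :: "seq set \<Rightarrow> seq measure \<Rightarrow> bool" where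
  "borel_prob_on S \<mu> \<longleftrightarrow> prob_space \<mu> \<and> sets \<mu> = sets (restrict_space borel S)"

definition invariant_prob :: "seq set \<Rightarrow> seq measure \<Rightarrow> bool" where
  "invariant_prob S \<mu> \<longleftrightarrow> borel_prob_on S \<mu> \<and>
     (\<forall>B\<in>sets \<mu>. emeasure \<mu> (shift -` B \<inter> space \<mu>) = emeasure \<mu> B)"

definition part_H :: "seq measure \<Rightarrow> (seq \<Rightarrow> 'b) \<Rightarrow> real" where
  "part_H \<mu> \<eta> = - (\<Sum>a\<in>\<eta> ` space \<mu>.
       measure \<mu> (\<eta> -` {a} \<inter> space \<mu>) * ln (measure \<mu> (\<eta> -` {a} \<inter> space \<mu>)))"

definition join_part :: "(seq \<Rightarrow> nat) \<Rightarrow> nat \<Rightarrow> seq \<Rightarrow> nat list" where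
  "join_part \<xi> n x = map (\<lambda>i. \<xi> ((shift ^^ i) x)) [0..<n]"

definition entropy_part :: "seq measure \<Rightarrow> (seq \<Rightarrow> nat) \<Rightarrow> real" where
  "entropy_part \<mu> \<xi> = lim (\<lambda>n. part_H \<mu> (join_part \<xi> n) / real n)"

definition finite_partitions :: "seq measure \<Rightarrow> (seq \<Rightarrow> nat) set" where
  "finite_partitions \<mu> = {\<xi>. \<xi> \<in> measurable \<mu> (count_space UNIV) \<and> finite (\<xi> ` space \<mu>)}"

definition ks_entropy :: "seq measure \<Rightarrow> ereal" where
  "ks_entropy \<mu> = (SUP \<xi>\<in>finite_partitions \<mu>. ereal (entropy_part \<mu> \<xi>))"

definition equilibrium_state :: "seq set \<Rightarrow> (seq \<Rightarrow> real) \<Rightarrow> seq measure \<Rightarrow> bool" where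
  "equilibrium_state S \<phi> \<mu> \<longleftrightarrow> invariant_prob S \<mu> \<and>
     (\<forall>\<nu>. invariant_prob S \<nu> \<longrightarrow>
        ks_entropy \<nu> + ereal (integral\<^sup>L \<nu> \<phi>) \<le> ks_entropy \<mu> + ereal (integral\<^sup>L \<mu> \<phi>))"

definition cyl :: "seq set \<Rightarrow> nat \<Rightarrow> seq \<Rightarrow> seq set" where
  "cyl S m x = {y\<in>S. \<forall>j. \<bar>j\<bar> \<le> int m \<longrightarrow> y j = x j}"

definition inner_cyl :: "seq set \<Rightarrow> seq set \<Rightarrow> nat \<Rightarrow> seq set" where
  "inner_cyl S A m = \<Union>{cyl S m x | x. x \<in> S \<and> cyl S m x \<subseteq> A}"

definition outer_cyl :: "seq set \<Rightarrow> seq set \<Rightarrow> nat \<Rightarrow> seq set" where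
  "outer_cyl S A m = \<Union>{cyl S m x | x. x \<in> S \<and> cyl S m x \<inter> A \<noteq> {}}"

definition diff_cyl :: "seq set \<Rightarrow> seq set \<Rightarrow> nat \<Rightarrow> seq set" where
  "diff_cyl S A m = outer_cyl S A m - inner_cyl S A m"

text \<open>First return/hitting time r_D (infinity if none) and its iterates;
 ret_iter D (Suc n) is r_D^(n+1), ret_iter D 1 = r_D.\<close>
definition ret :: "seq set \<Rightarrow> seq \<Rightarrow> enat" where
  "ret D x = (if \<exists>n\<ge>1. (shift ^^ n) x \<in> D
      then enat (LEAST n. n \<ge> 1 \<and> (shift ^^ n) x \<in> D) else \<infinity>)"

primrec ret_iter :: "seq set \<Rightarrow> nat \<Rightarrow> seq \<Rightarrow> enat" where
  "ret_iter D 0 x = 0"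
| "ret_iter D (Suc n) x = (case ret_iter D n x of
      \<infinity> \<Rightarrow> \<infinity> | enat k \<Rightarrow> enat k + ret D ((shift ^^ k) x))"

definition log_rate :: "seq measure \<Rightarrow> seq set \<Rightarrow> real \<Rightarrow> nat \<Rightarrow> ereal" where
  "log_rate \<mu> D v n =
     (let p = measure \<mu> {x\<in>space \<mu>. \<exists>k. ret_iter D n x = enat k \<and> real k / real n \<le> v}
      in if p = 0 then -\<infinity> else ereal (ln p / real n))"

end

theory Submission
  imports Defs "HOL-Probability.Projective_Limit" "HOL-Probability.Discrete_Topology"
begin

text \<open>
  Fix \<open>v > 0\<close> and suppose that for arbitrarily large \<open>m\<close> there are arbitrarily large \<open>n\<close>
  and points \<open>x\<close> with \<open>r\<^sup>n(x) \<le> v n\<close> for the set \<open>D\<^sub>m\<close>. Then the orbit segment of \<open>x\<close> of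
  length \<open>k = r\<^sup>n(x)\<close> spends at least a fraction \<open>1/v\<close> of its time in \<open>D\<^sub>m\<close>. Since the
  alphabet is finite, a diagonal argument over the countably many cylinder events gives a
  subsequence of these empirical measures converging on all cylinders, and the limit is a
  shift-invariant probability measure \<open>\<nu>\<close> (Krylov--Bogolyubov). As \<open>D\<^sub>k \<supseteq> D\<^sub>m\<close> for \<open>k \<le> m\<close>
  is a union of \<open>k\<close>-cylinders, \<open>\<nu>(D\<^sub>k) \<ge> 1/v\<close> for all \<open>k\<close>; and \<open>\<Inter>\<^sub>k D\<^sub>k \<subseteq> \<partial>A\<close>, so
  \<open>\<nu>(\<partial>A) \<ge> 1/v > 0\<close>, a contradiction. Hence for \<open>m\<close> large the event in \<open>\<Phi>\<^bsub>D\<^sub>m\<^esub>(v)\<close>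
  is empty for all large \<open>n\<close>, and its log-probability is \<open>-\<infinity>\<close>: no property of \<open>\<mu>\<^sub>\<phi>\<close>, \<open>T\<close>
  or \<open>\<phi>\<close> is needed.
\<close>

lemma convergent_subseq_unit_interval_family:
  fixes f :: "nat \<Rightarrow> 'c::countable \<Rightarrow> real"
  assumes "\<And>n c. f n c \<in> {0..1}"
  shows "\<exists>r. strict_mono r \<and> (\<forall>c. convergent (\<lambda>n. f (r n) c))"
proof -
  define K where "K = Pi\<^sub>E UNIV (\<lambda>_::'c. {0..1::real})"
  have "compactin (product_topology (\<lambda>_. euclidean) UNIV) K"
    unfolding K_def compactin_PiE by (auto simp: compactin_euclidean_iff)
  then have "compact K" by (simp add: euclidean_product_topology compactin_euclidean_iff)
  then have "seq_compact K" by (rule compact_imp_seq_compact)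
  moreover have "\<forall>n. f n \<in> K" using assms by (auto simp: K_def)
  ultimately obtain l r where "strict_mono r" "(f \<circ> r) \<longlonglongrightarrow> l"
    using seq_compactE by blast
  moreover have "(\<lambda>n. f (r n) c) \<longlonglongrightarrow> l c" for c
    using continuous_on_tendsto_compose[OF continuous_on_product_coordinates[of c] \<open>(f \<circ> r) \<longlonglongrightarrow> l\<close>]
    by (simp add: o_def)
  ultimately show ?thesis by (auto simp: convergent_def)
qed

lemma card_filter_mem_eq_sum:
  assumes "finite A" "finite U"
  shows "card {t\<in>A. g t \<in> U} = (\<Sum>u\<in>U. card {t\<in>A. g t = u})"
proof -
  have "{t\<in>A. g t \<in> U} = (\<Union>u\<in>U. {t\<in>A. g t = u})" by auto
  also have "card \<dots> = (\<Sum>u\<in>U. card {t\<in>A. g t = u})"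
    using assms by (intro card_UN_disjoint) auto
  finally show ?thesis .
qed

lemma card_filter_Suc_diff_le_1:
  "\<bar>real (card {t\<in>{1..L}. p (Suc t)}) - real (card {t\<in>{1..L::nat}. p t})\<bar> \<le> 1"
proof -
  have "{t\<in>{2..L+1}. p t} = Suc ` {t\<in>{1..L}. p (Suc t)}"
    by (auto simp: image_iff) (metis Suc_le_D Suc_le_mono add.commute add_0
        le_add_diff_inverse numeral_2_eq_2 plus_1_eq_Suc)
  then have shifted: "card {t\<in>{1..L}. p (Suc t)} = card {t\<in>{2..L+1}. p t}"
    by (simp add: card_image)
  have "card {t\<in>{2..L+1}. p t} \<le> card (insert (L+1) {t\<in>{1..L}. p t})"
    by (intro card_mono) auto
  also have "\<dots> \<le> card {t\<in>{1..L}. p t} + 1" by (simp add: card_insert_le_m1)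
  finally have up: "card {t\<in>{2..L+1}. p t} \<le> card {t\<in>{1..L}. p t} + 1" .
  have "card {t\<in>{1..L}. p t} \<le> card (insert 1 {t\<in>{2..L+1}. p t})"
    by (intro card_mono) auto
  also have "\<dots> \<le> card {t\<in>{2..L+1}. p t} + 1" by (simp add: card_insert_le_m1)
  finally have down: "card {t\<in>{1..L}. p t} \<le> card {t\<in>{2..L+1}. p t} + 1" .
  show ?thesis unfolding shifted using up down by linarith
qed

definition left_shift :: "(int \<Rightarrow> 'a) \<Rightarrow> int \<Rightarrow> 'a" where
  "left_shift y = (\<lambda>i. y (i + 1))"

lemma left_shift_measurable:
  "left_shift \<in> measurable (PiM UNIV (\<lambda>_. M)) (PiM UNIV (\<lambda>_. M))"
  unfolding left_shift_def by (rule measurable_PiM_single') (auto simp: space_PiM)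

lemma singleton_in_sets_PiM:
  fixes u :: "int \<Rightarrow> 'a::{countable,t1_space}"
  assumes "finite J" "u \<in> extensional J"
  shows "{u} \<in> sets (PiM J (\<lambda>_. borel))"
proof -
  have "{u} = Pi\<^sub>E J (\<lambda>i. {u i})" using assms(2)
    by (auto simp: PiE_iff extensional_def fun_eq_iff) metis
  also have "\<dots> \<in> sets (PiM J (\<lambda>_. borel))"
    using assms(1) by (intro sets_PiM_I_finite) auto
  finally show ?thesis .
qed

lemma subset_space_in_sets_PiM:
  fixes X :: "(int \<Rightarrow> 'a::{countable,t1_space}) set"
  assumes "finite J" "X \<subseteq> space (PiM J (\<lambda>_. borel))"
  shows "X \<in> sets (PiM J (\<lambda>_. borel))"
proof -
  have "countable X"
    using countable_PiE[OF assms(1), of "\<lambda>_. UNIV::'a set"] assms(2)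
    by (auto simp: space_PiM intro: countable_subset)
  then have "X = (\<Union>u\<in>X. {u})" by auto
  also have "\<dots> \<in> sets (PiM J (\<lambda>_. borel))"
    using \<open>countable X\<close> assms
    by (intro sets.countable_UN') (auto intro!: singleton_in_sets_PiM simp: space_PiM PiE_iff)
  finally show ?thesis .
qed

lemma cylinder_event_in_sets_PiM:
  fixes \<Phi> :: "(int \<Rightarrow> 'a::{countable,t1_space}) \<Rightarrow> bool"
  assumes "finite J"
  shows "{y. \<Phi> (restrict y J)} \<in> sets (PiM UNIV (\<lambda>_. borel::'a measure))"
proof -
  define X where "X = {u\<in>space (PiM J (\<lambda>_. borel::'a measure)). \<Phi> u}"
  have "X \<in> sets (PiM J (\<lambda>_. borel))"
    unfolding X_def by (rule subset_space_in_sets_PiM[OF assms]) auto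
  moreover have "{y. \<Phi> (restrict y J)} = prod_emb UNIV (\<lambda>_. borel) J X"
    by (auto simp: prod_emb_def X_def space_PiM)
  ultimately show ?thesis by (simp add: measurable_prod_emb)
qed

section \<open>Limits of empirical measures on a finite alphabet\<close>

locale empirical_measures =
  fixes \<Sigma>0 :: "'a::{countable,polish_space} set" and x :: "nat \<Rightarrow> int \<Rightarrow> 'a" and L :: "nat \<Rightarrow> nat"
  assumes finite_alphabet: "finite \<Sigma>0" and x_in_alphabet: "\<And>j i. x j i \<in> \<Sigma>0"
    and L_pos: "\<And>j. 0 < L j" and L_at_top: "filterlim L at_top sequentially"
begin

text \<open>\<open>freq j Q\<close> is the mass of \<open>Q\<close> under the empirical measure of the orbit segment
  \<open>\<sigma>(x j), \<dots>, \<sigma>\<^bsup>L j\<^esup>(x j)\<close>.\<close>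

definition freq :: "nat \<Rightarrow> ((int \<Rightarrow> 'a) \<Rightarrow> bool) \<Rightarrow> real" where
  "freq j Q = real (card {t\<in>{1..L j}. Q (\<lambda>i. x j (i + int t))}) / real (L j)"

definition words :: "int set \<Rightarrow> (int \<Rightarrow> 'a) set" where
  "words J = Pi\<^sub>E J (\<lambda>_. \<Sigma>0)"

lemma finite_words: "finite J \<Longrightarrow> finite (words J)"
  unfolding words_def using finite_alphabet by (intro finite_PiE) auto

lemma restrict_in_words: "restrict (\<lambda>i. x j (i + int t)) J \<in> words J"
  unfolding words_def using x_in_alphabet by auto

lemma words_subset_space: "words J \<subseteq> space (PiM J (\<lambda>_. borel))"
  by (auto simp: words_def space_PiM)

lemma freq_bounds: "freq j Q \<in> {0..1}"
proof -
  have "card {t\<in>{1..L j}. Q (\<lambda>i. x j (i + int t))} \<le> card {1..L j}" by (intro card_mono) auto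
  then show ?thesis using L_pos[of j] by (auto simp: freq_def divide_le_eq_1)
qed

lemma freq_True: "freq j (\<lambda>_. True) = 1"
proof -
  have "{t\<in>{1..L j}. True} = {1..L j}" by auto
  then show ?thesis using L_pos[of j] by (simp add: freq_def)
qed

lemma freq_left_shift: "\<bar>freq j (\<lambda>y. Q (left_shift y)) - freq j Q\<bar> \<le> 1 / real (L j)"
proof -
  define p where "p t = Q (\<lambda>i. x j (i + int t))" for t
  have "freq j (\<lambda>y. Q (left_shift y)) = real (card {t\<in>{1..L j}. p (Suc t)}) / real (L j)"
    unfolding freq_def p_def left_shift_def by (simp add: algebra_simps)
  moreover have "freq j Q = real (card {t\<in>{1..L j}. p t}) / real (L j)"
    by (simp add: freq_def p_def)
  ultimately show ?thesis
    using card_filter_Suc_diff_le_1[of "L j" p] L_pos[of j]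
    by (simp add: diff_divide_distrib[symmetric] abs_divide divide_right_mono)
qed

lemma freq_eq_sum_words:
  assumes "finite J"
  shows "freq j (\<lambda>y. \<Phi> (restrict y J)) = (\<Sum>u\<in>{u\<in>words J. \<Phi> u}. freq j (\<lambda>y. restrict y J = u))"
proof -
  have "{t\<in>{1..L j}. \<Phi> (restrict (\<lambda>i. x j (i + int t)) J)} =
        {t\<in>{1..L j}. restrict (\<lambda>i. x j (i + int t)) J \<in> {u\<in>words J. \<Phi> u}}"
    using restrict_in_words by auto
  then show ?thesis
    using card_filter_mem_eq_sum[of "{1..L j}" "{u\<in>words J. \<Phi> u}"] finite_words[OF assms]
    by (simp add: freq_def sum_divide_distrib)
qed

text \<open>Cylinder events coded by finite lists of constraints form a countable family, so a
  single subsequence makes all their frequencies converge.\<close>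

definition list_freq :: "nat \<Rightarrow> (int \<times> 'a) list \<Rightarrow> real" where
  "list_freq j c = freq j (\<lambda>y. \<forall>(i,s)\<in>set c. y i = s)"

definition subseq :: "nat \<Rightarrow> nat" where
  "subseq = (SOME r. strict_mono r \<and> (\<forall>c. convergent (\<lambda>n. list_freq (r n) c)))"

lemma subseq: "strict_mono subseq" "\<And>c. convergent (\<lambda>n. list_freq (subseq n) c)"
proof -
  have "\<exists>r. strict_mono r \<and> (\<forall>c. convergent (\<lambda>n. list_freq (r n) c))"
    by (rule convergent_subseq_unit_interval_family) (unfold list_freq_def, rule freq_bounds)
  then have "strict_mono subseq \<and> (\<forall>c. convergent (\<lambda>n. list_freq (subseq n) c))"
    unfolding subseq_def by (rule someI_ex)
  then show "strict_mono subseq" "\<And>c. convergent (\<lambda>n. list_freq (subseq n) c)" by auto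
qed

lemma inverse_L_subseq_tendsto_0: "(\<lambda>n. 1 / real (L (subseq n))) \<longlonglongrightarrow> 0"
proof -
  have "filterlim (\<lambda>n. real (L (subseq n))) at_top sequentially"
    using filterlim_compose[OF filterlim_real_sequentially
        filterlim_compose[OF L_at_top filterlim_subseq[OF subseq(1)]]] .
  then show ?thesis by (simp add: tendsto_inverse_0_at_top divide_inverse)
qed

definition weight :: "int set \<Rightarrow> (int \<Rightarrow> 'a) \<Rightarrow> real" where
  "weight J u = lim (\<lambda>n. freq (subseq n) (\<lambda>y. restrict y J = u))"

lemma freq_word_tendsto_weight:
  assumes "finite J"
  shows "(\<lambda>n. freq (subseq n) (\<lambda>y. restrict y J = u)) \<longlonglongrightarrow> weight J u"
proof -
  have "convergent (\<lambda>n. freq (subseq n) (\<lambda>y. restrict y J = u))"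
  proof (cases "u \<in> extensional J")
    case True
    obtain c where c: "set c = (\<lambda>i. (i, u i)) ` J"
      using finite_list[of "(\<lambda>i. (i, u i)) ` J"] assms by blast
    have "(\<forall>(i,s)\<in>set c. y i = s) \<longleftrightarrow> restrict y J = u" for y
      using True unfolding c by (auto simp: fun_eq_iff restrict_def extensional_def)
    then have "(\<lambda>n. freq (subseq n) (\<lambda>y. restrict y J = u)) = (\<lambda>n. list_freq (subseq n) c)"
      unfolding list_freq_def by simp
    then show ?thesis using subseq(2) by simp
  next
    case False
    then have "\<And>y. restrict y J \<noteq> u" by auto
    then have "(\<lambda>n. freq (subseq n) (\<lambda>y. restrict y J = u)) = (\<lambda>n. 0)"
      by (simp add: freq_def)
    then show ?thesis by (simp add: convergent_const)
  qed
  then show ?thesis unfolding weight_def by (simp add: convergent_LIMSEQ_iff)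
qed

lemma weight_nonneg: "finite J \<Longrightarrow> 0 \<le> weight J u"
  by (rule LIMSEQ_le_const[OF freq_word_tendsto_weight]) (use freq_bounds in auto)

lemma freq_tendsto_sum_weight:
  assumes "finite J"
  shows "(\<lambda>n. freq (subseq n) (\<lambda>y. \<Phi> (restrict y J))) \<longlonglongrightarrow> (\<Sum>u\<in>{u\<in>words J. \<Phi> u}. weight J u)"
  unfolding freq_eq_sum_words[OF assms] by (intro tendsto_sum freq_word_tendsto_weight assms)

lemma sum_weight_words: "finite J \<Longrightarrow> (\<Sum>u\<in>words J. weight J u) = 1"
  using LIMSEQ_unique[OF freq_tendsto_sum_weight[of J "\<lambda>_. True"]] by (simp add: freq_True)

definition marginal :: "int set \<Rightarrow> (int \<Rightarrow> 'a) measure" where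
  "marginal J = distr (point_measure (words J) (\<lambda>u. ennreal (weight J u))) (PiM J (\<lambda>_. borel)) (\<lambda>u. u)"

lemma sets_marginal: "sets (marginal J) = sets (PiM J (\<lambda>_. borel))"
  by (simp add: marginal_def)

lemma emeasure_marginal:
  assumes "finite J" "X \<in> sets (PiM J (\<lambda>_. borel))"
  shows "emeasure (marginal J) X = ennreal (\<Sum>u\<in>{u\<in>words J. u \<in> X}. weight J u)"
proof -
  have "emeasure (marginal J) X = emeasure (point_measure (words J) (\<lambda>u. ennreal (weight J u))) (X \<inter> words J)"
    unfolding marginal_def using assms words_subset_space
    by (subst emeasure_distr) (auto simp: space_point_measure Int_commute)
  also have "\<dots> = (\<Sum>u\<in>X \<inter> words J. ennreal (weight J u))"
    using finite_words[OF assms(1)] by (intro emeasure_point_measure_finite) auto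
  also have "\<dots> = ennreal (\<Sum>u\<in>X \<inter> words J. weight J u)"
    using weight_nonneg[OF assms(1)] by (intro sum_ennreal) auto
  also have "X \<inter> words J = {u\<in>words J. u \<in> X}" by auto
  finally show ?thesis .
qed

lemma prob_space_marginal:
  assumes "finite J"
  shows "prob_space (marginal J)"
proof
  have "space (marginal J) = space (PiM J (\<lambda>_. borel))" by (simp add: marginal_def)
  then have "emeasure (marginal J) (space (marginal J))
      = ennreal (\<Sum>u\<in>{u\<in>words J. u \<in> space (PiM J (\<lambda>_. borel))}. weight J u)"
    using emeasure_marginal[OF assms] by simp
  also have "{u\<in>words J. u \<in> space (PiM J (\<lambda>_. borel))} = words J"
    using words_subset_space by auto
  finally show "emeasure (marginal J) (space (marginal J)) = 1"
    by (simp add: sum_weight_words[OF assms])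
qed

lemma marginal_projective:
  assumes JH: "J \<subseteq> H" and fH: "finite H"
  shows "marginal J = distr (marginal H) (PiM J (\<lambda>_. borel)) (\<lambda>f. restrict f J)"
proof (rule measure_eqI)
  have fJ: "finite J" using JH fH finite_subset by blast
  show "sets (marginal J) = sets (distr (marginal H) (PiM J (\<lambda>_. borel)) (\<lambda>f. restrict f J))"
    by (simp add: sets_marginal)
  fix X assume "X \<in> sets (marginal J)"
  then have XJ: "X \<in> sets (PiM J (\<lambda>_. borel))" by (simp add: sets_marginal)
  define Y where "Y = (\<lambda>f. restrict f J) -` X \<inter> space (PiM H (\<lambda>_. borel))"
  have YH: "Y \<in> sets (PiM H (\<lambda>_. borel))"
    unfolding Y_def using measurable_restrict_subset[OF JH] XJ by (rule measurable_sets)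
  have "(\<lambda>f. restrict f J) \<in> measurable (marginal H) (PiM J (\<lambda>_. borel))"
    using measurable_restrict_subset[OF JH] by (simp add: measurable_cong_sets[OF sets_marginal refl])
  moreover have "space (marginal H) = space (PiM H (\<lambda>_. borel))" by (simp add: marginal_def)
  ultimately have "emeasure (distr (marginal H) (PiM J (\<lambda>_. borel)) (\<lambda>f. restrict f J)) X = emeasure (marginal H) Y"
    using XJ by (simp add: emeasure_distr Y_def)
  also have "\<dots> = ennreal (\<Sum>u\<in>{u\<in>words H. u \<in> Y}. weight H u)" by (rule emeasure_marginal[OF fH YH])
  also have "(\<Sum>u\<in>{u\<in>words H. u \<in> Y}. weight H u) = (\<Sum>u\<in>{u\<in>words J. u \<in> X}. weight J u)"
  proof -
    have "\<And>y. restrict y H \<in> Y \<longleftrightarrow> restrict y J \<in> X"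
      unfolding Y_def using JH by (auto simp: space_PiM restrict_restrict Int_absorb1)
    then show ?thesis
      using LIMSEQ_unique[OF freq_tendsto_sum_weight[OF fH, of "\<lambda>u. u \<in> Y"]]
        freq_tendsto_sum_weight[OF fJ, of "\<lambda>u. u \<in> X"] by simp
  qed
  finally show "emeasure (marginal J) X = emeasure (distr (marginal H) (PiM J (\<lambda>_. borel)) (\<lambda>f. restrict f J)) X"
    using emeasure_marginal[OF fJ XJ] by (simp only:)
qed

lemma polish_projective_marginal: "polish_projective UNIV marginal"
  unfolding polish_projective_def projective_family_def using marginal_projective prob_space_marginal by blast

definition lim_measure :: "(int \<Rightarrow> 'a) measure" where
  "lim_measure = projective_family.lim UNIV marginal (\<lambda>_. borel)"

lemma
  shows prob_space_lim_measure: "prob_space lim_measure"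
    and sets_lim_measure: "sets lim_measure = sets (PiM UNIV (\<lambda>_. borel))"
    and space_lim_measure: "space lim_measure = UNIV"
proof -
  interpret polish_projective UNIV marginal by (rule polish_projective_marginal)
  show "prob_space lim_measure" unfolding lim_measure_def by (rule P.prob_space_axioms)
  show "sets lim_measure = sets (PiM UNIV (\<lambda>_. borel))" unfolding lim_measure_def by simp
  then show "space lim_measure = UNIV" by (simp add: sets_eq_imp_space_eq[of lim_measure] space_PiM)
qed

lemma emeasure_lim_measure_emb:
  assumes "finite J" "X \<in> sets (PiM J (\<lambda>_. borel))"
  shows "emeasure lim_measure (prod_emb UNIV (\<lambda>_. borel) J X) = emeasure (marginal J) X"
proof -
  interpret polish_projective UNIV marginal by (rule polish_projective_marginal)
  show ?thesis unfolding lim_measure_def using assms by (intro emeasure_lim_emb) auto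
qed

lemma cylinder_event_in_sets_lim_measure: "finite J \<Longrightarrow> {y. \<Phi> (restrict y J)} \<in> sets lim_measure"
  unfolding sets_lim_measure by (rule cylinder_event_in_sets_PiM)

lemma freq_tendsto_lim_measure_words:
  assumes J: "finite J"
  shows "(\<lambda>n. freq (subseq n) (\<lambda>y. \<Phi> (restrict y J)))
    \<longlonglongrightarrow> measure lim_measure {y. restrict y J \<in> words J \<and> \<Phi> (restrict y J)}"
proof -
  define X where "X = {u\<in>words J. \<Phi> u}"
  have X: "X \<in> sets (PiM J (\<lambda>_. borel))"
    unfolding X_def using words_subset_space by (intro subset_space_in_sets_PiM[OF J]) auto
  have "{y. restrict y J \<in> words J \<and> \<Phi> (restrict y J)} = prod_emb UNIV (\<lambda>_. borel) J X"
    by (auto simp: prod_emb_def X_def space_PiM)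
  then have "emeasure lim_measure {y. restrict y J \<in> words J \<and> \<Phi> (restrict y J)}
      = ennreal (\<Sum>u\<in>{u\<in>words J. \<Phi> u}. weight J u)"
    using emeasure_lim_measure_emb[OF J X] emeasure_marginal[OF J X] by (simp add: X_def)
  then have "measure lim_measure {y. restrict y J \<in> words J \<and> \<Phi> (restrict y J)}
      = (\<Sum>u\<in>{u\<in>words J. \<Phi> u}. weight J u)"
    using weight_nonneg[OF J] by (simp add: measure_def sum_nonneg)
  then show ?thesis using freq_tendsto_sum_weight[OF J] by simp
qed

lemma AE_lim_measure_alphabet: "AE y in lim_measure. \<forall>i. y i \<in> \<Sigma>0"
proof -
  interpret prob_space lim_measure by (rule prob_space_lim_measure)
  have "AE y in lim_measure. y i \<in> \<Sigma>0" for i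
  proof -
    have "measure lim_measure {y. restrict y {i} \<in> words {i} \<and> True} = 1"
      using LIMSEQ_unique[OF freq_tendsto_lim_measure_words[of "{i}" "\<lambda>_. True"]]
      by (simp add: freq_True)
    moreover have "{y. restrict y {i} \<in> words {i} \<and> True} = {y. y i \<in> \<Sigma>0}" by (auto simp: words_def)
    ultimately show ?thesis using AE_prob_1[of "{y. y i \<in> \<Sigma>0}"] by simp
  qed
  then show ?thesis by (simp add: AE_all_countable)
qed

lemma freq_tendsto_lim_measure:
  assumes J: "finite J"
  shows "(\<lambda>n. freq (subseq n) (\<lambda>y. \<Phi> (restrict y J))) \<longlonglongrightarrow> measure lim_measure {y. \<Phi> (restrict y J)}"
proof -
  have "measure lim_measure {y. \<Phi> (restrict y J)}
      = measure lim_measure {y. restrict y J \<in> words J \<and> \<Phi> (restrict y J)}"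
  proof (rule measure_eq_AE)
    show "AE y in lim_measure. (y \<in> {y. \<Phi> (restrict y J)})
        = (y \<in> {y. restrict y J \<in> words J \<and> \<Phi> (restrict y J)})"
      using AE_lim_measure_alphabet by eventually_elim (auto simp: words_def)
    show "{y. \<Phi> (restrict y J)} \<in> sets lim_measure"
      by (rule cylinder_event_in_sets_lim_measure[OF J])
    show "{y. restrict y J \<in> words J \<and> \<Phi> (restrict y J)} \<in> sets lim_measure"
      using cylinder_event_in_sets_lim_measure[OF J, of "\<lambda>u. u \<in> words J \<and> \<Phi> u"] by simp
  qed
  then show ?thesis using freq_tendsto_lim_measure_words[OF J] by simp
qed

lemma left_shift_measurable_lim_measure: "left_shift \<in> measurable lim_measure lim_measure"
  using left_shift_measurable by (simp add: measurable_cong_sets[OF sets_lim_measure sets_lim_measure])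

lemma lim_measure_shift_invariant: "distr lim_measure lim_measure left_shift = lim_measure"
proof (rule measure_eqI_PiM_infinite[where I=UNIV and M="\<lambda>_. borel"])
  interpret prob_space lim_measure by (rule prob_space_lim_measure)
  show "sets (distr lim_measure lim_measure left_shift) = sets (PiM UNIV (\<lambda>_. borel))"
    by (simp add: sets_lim_measure)
  show "sets lim_measure = sets (PiM UNIV (\<lambda>_. borel))" by (rule sets_lim_measure)
  show "finite_measure (distr lim_measure lim_measure left_shift)"
    using prob_space_distr[OF left_shift_measurable_lim_measure] by (simp add: prob_space_def)
  fix A :: "int \<Rightarrow> 'a set" and J :: "int set" assume J: "finite J" "J \<subseteq> UNIV"
  define \<Phi> where "\<Phi> u = (\<forall>i\<in>J. u i \<in> A i)" for u :: "int \<Rightarrow> 'a"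
  define J' where "J' = (\<lambda>i. i + 1) ` J"
  define \<Phi>' where "\<Phi>' u = (\<forall>i\<in>J. u (i + 1) \<in> A i)" for u :: "int \<Rightarrow> 'a"
  have fJ': "finite J'" using J by (simp add: J'_def)
  have emb: "prod_emb UNIV (\<lambda>_. borel) J (Pi\<^sub>E J A) = {y. \<Phi> (restrict y J)}"
    by (auto simp: prod_emb_def space_PiM \<Phi>_def PiE_iff)
  have preimage: "left_shift -` {y. \<Phi> (restrict y J)} \<inter> space lim_measure = {y. \<Phi>' (restrict y J')}"
    by (auto simp: space_lim_measure left_shift_def \<Phi>_def \<Phi>'_def J'_def)
  have distr_eq: "emeasure (distr lim_measure lim_measure left_shift) {y. \<Phi> (restrict y J)}
      = emeasure lim_measure {y. \<Phi>' (restrict y J')}"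
    using emeasure_distr[OF left_shift_measurable_lim_measure
        cylinder_event_in_sets_lim_measure[OF J(1), of \<Phi>]] unfolding preimage .
  have same: "\<And>y. \<Phi>' (restrict y J') = \<Phi> (restrict (left_shift y) J)"
    by (auto simp: \<Phi>_def \<Phi>'_def J'_def left_shift_def)
  have diff: "(\<lambda>n. freq (subseq n) (\<lambda>y. \<Phi>' (restrict y J')) - freq (subseq n) (\<lambda>y. \<Phi> (restrict y J)))
      \<longlonglongrightarrow> 0"
    unfolding same
    by (rule Lim_null_comparison[OF _ inverse_L_subseq_tendsto_0])
      (use freq_left_shift[of _ "\<lambda>y. \<Phi> (restrict y J)"] in simp)
  then have "measure lim_measure {y. \<Phi>' (restrict y J')} = measure lim_measure {y. \<Phi> (restrict y J)}"
    using LIMSEQ_unique[OF tendsto_diff[OF freq_tendsto_lim_measure[OF fJ', of \<Phi>']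
          freq_tendsto_lim_measure[OF J(1), of \<Phi>]] diff] by linarith
  then show "emeasure (distr lim_measure lim_measure left_shift) (prod_emb UNIV (\<lambda>_. borel) J (Pi\<^sub>E J A)) =
             emeasure lim_measure (prod_emb UNIV (\<lambda>_. borel) J (Pi\<^sub>E J A))"
    unfolding emb distr_eq by (metis emeasure_eq_measure)
qed

end

section \<open>The shift and the cylinder approximations of \<open>A\<close>\<close>

lemma shift_funpow: "(shift ^^ t) x = (\<lambda>j. x (j + int t))"
  by (induction t arbitrary: x) (auto simp: shift_def funpow_Suc_right algebra_simps)

lemma shift_funpow_SFT:
  assumes "x \<in> SFT N T"
  shows "(shift ^^ t) x \<in> SFT N T"
proof -
  have "x (j + int t) \<in> {1..N} \<and> T (x (j + int t)) (x (j + int t + 1))" for j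
    using assms by (simp add: SFT_def)
  then show ?thesis by (simp add: SFT_def shift_funpow algebra_simps)
qed

lemma shift_SFT: "x \<in> SFT N T \<Longrightarrow> shift x \<in> SFT N T"
  using shift_funpow_SFT[of x N T 1] by simp

lemma closed_SFT: "closed (SFT N T)"
  unfolding closed_def
proof (subst open_subopen, intro ballI)
  fix x assume "x \<in> - SFT N T"
  then obtain j where j: "\<not> (x j \<in> {1..N} \<and> T (x j) (x (j + 1)))"
    by (auto simp: SFT_def)
  define U where "U = {f::seq. \<forall>i\<in>{j, j+1}. f (id i) \<in> {x i}}"
  have "open U"
    unfolding U_def by (rule product_topology_basis') (auto intro: discrete_topology_class.open_discrete)
  moreover have "U \<subseteq> - SFT N T"
  proof
    fix f assume "f \<in> U"
    then have "f j = x j" "f (j + 1) = x (j + 1)" by (auto simp: U_def)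
    then show "f \<in> - SFT N T" using j unfolding SFT_def by (metis (mono_tags, lifting) ComplI mem_Collect_eq)
  qed
  moreover have "x \<in> U" by (simp add: U_def)
  ultimately show "\<exists>U. open U \<and> x \<in> U \<and> U \<subseteq> - SFT N T" by blast
qed

lemma ret_eq_enatD:
  assumes "ret D y = enat r"
  shows "1 \<le> r" "(shift ^^ r) y \<in> D"
proof -
  have ex: "\<exists>n\<ge>1. (shift ^^ n) y \<in> D" using assms unfolding ret_def by (auto split: if_splits)
  then have "r = (LEAST n. n \<ge> 1 \<and> (shift ^^ n) y \<in> D)" using assms unfolding ret_def by auto
  then show "1 \<le> r" "(shift ^^ r) y \<in> D"
    using LeastI_ex[of "\<lambda>n. n \<ge> 1 \<and> (shift ^^ n) y \<in> D"] ex by auto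
qed

lemma ret_iter_le_card_visits:
  "ret_iter D n x = enat k \<Longrightarrow> n \<le> card {t\<in>{1..k}. (shift ^^ t) x \<in> D}"
proof (induction n arbitrary: k)
  case 0
  then show ?case by simp
next
  case (Suc n)
  obtain k0 where k0: "ret_iter D n x = enat k0"
    using Suc.prems by (cases "ret_iter D n x") auto
  then have "enat k = enat k0 + ret D ((shift ^^ k0) x)" using Suc.prems by simp
  then obtain r where r: "ret D ((shift ^^ k0) x) = enat r" and k: "k = k0 + r"
    by (cases "ret D ((shift ^^ k0) x)") auto
  have "(shift ^^ k) x = (shift ^^ r) ((shift ^^ k0) x)"
    unfolding k add.commute[of k0 r] funpow_add by simp
  then have "1 \<le> r" "(shift ^^ k) x \<in> D"
    using ret_eq_enatD[OF r] by auto
  then have "insert k {t\<in>{1..k0}. (shift ^^ t) x \<in> D} \<subseteq> {t\<in>{1..k}. (shift ^^ t) x \<in> D}"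
    by (auto simp: k)
  then have "card (insert k {t\<in>{1..k0}. (shift ^^ t) x \<in> D}) \<le> card {t\<in>{1..k}. (shift ^^ t) x \<in> D}"
    by (intro card_mono) auto
  moreover have "card (insert k {t\<in>{1..k0}. (shift ^^ t) x \<in> D}) = Suc (card {t\<in>{1..k0}. (shift ^^ t) x \<in> D})"
    using \<open>1 \<le> r\<close> by (subst card_insert_disjoint) (auto simp: k)
  ultimately show ?case using Suc.IH[OF k0] by simp
qed

lemma cyl_eq: "y \<in> cyl S m x \<Longrightarrow> cyl S m y = cyl S m x"
  by (auto simp: cyl_def)

lemma mem_outer_cyl_iff: "y \<in> outer_cyl S A m \<longleftrightarrow> y \<in> S \<and> cyl S m y \<inter> A \<noteq> {}"
proof
  assume "y \<in> outer_cyl S A m"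
  then obtain x where "cyl S m x \<inter> A \<noteq> {}" "y \<in> cyl S m x"
    unfolding outer_cyl_def by blast
  then show "y \<in> S \<and> cyl S m y \<inter> A \<noteq> {}" by (simp add: cyl_eq) (simp add: cyl_def)
next
  assume "y \<in> S \<and> cyl S m y \<inter> A \<noteq> {}"
  then show "y \<in> outer_cyl S A m" unfolding outer_cyl_def by (auto simp: cyl_def)
qed

lemma mem_inner_cyl_iff: "y \<in> inner_cyl S A m \<longleftrightarrow> y \<in> S \<and> cyl S m y \<subseteq> A"
proof
  assume "y \<in> inner_cyl S A m"
  then obtain x where "cyl S m x \<subseteq> A" "y \<in> cyl S m x"
    unfolding inner_cyl_def by blast
  then show "y \<in> S \<and> cyl S m y \<subseteq> A" by (simp add: cyl_eq) (simp add: cyl_def)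
next
  assume "y \<in> S \<and> cyl S m y \<subseteq> A"
  then show "y \<in> inner_cyl S A m" unfolding inner_cyl_def by (auto simp: cyl_def)
qed

lemma mem_diff_cyl_iff:
  "y \<in> diff_cyl S A m \<longleftrightarrow> y \<in> S \<and> cyl S m y \<inter> A \<noteq> {} \<and> \<not> cyl S m y \<subseteq> A"
  by (auto simp: diff_cyl_def mem_outer_cyl_iff mem_inner_cyl_iff)

lemma decseq_diff_cyl: "decseq (diff_cyl S A)"
  unfolding decseq_def mem_diff_cyl_iff
proof (intro allI impI subsetI)
  fix k m y assume "k \<le> m" "y \<in> diff_cyl S A m"
  moreover have "cyl S m y \<subseteq> cyl S k y" using \<open>k \<le> m\<close> by (auto simp: cyl_def)
  ultimately show "y \<in> diff_cyl S A k" unfolding mem_diff_cyl_iff by blast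
qed

lemma diff_cyl_eq_cylinder_event:
  "\<exists>\<Phi>. diff_cyl S A k = {y\<in>S. \<Phi> (restrict y {-int k..int k})}"
proof -
  define \<Phi> where "\<Phi> u = (\<exists>y\<in>diff_cyl S A k. restrict y {-int k..int k} = u)" for u
  have window: "y \<in> diff_cyl S A k" if "y \<in> S" "y' \<in> diff_cyl S A k"
    "restrict y' {-int k..int k} = restrict y {-int k..int k}" for y y'
  proof -
    have "y' j = y j" if "\<bar>j\<bar> \<le> int k" for j
      using that \<open>restrict y' {-int k..int k} = restrict y {-int k..int k}\<close>
      by (metis abs_le_iff atLeastAtMost_iff minus_le_iff restrict_apply')
    then have "cyl S k y' = cyl S k y" by (auto simp: cyl_def)
    then show ?thesis using that(1,2) by (simp add: mem_diff_cyl_iff)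
  qed
  have "diff_cyl S A k = {y\<in>S. \<Phi> (restrict y {-int k..int k})}"
  proof
    show "diff_cyl S A k \<subseteq> {y\<in>S. \<Phi> (restrict y {-int k..int k})}"
      unfolding \<Phi>_def using mem_diff_cyl_iff by blast
    show "{y\<in>S. \<Phi> (restrict y {-int k..int k})} \<subseteq> diff_cyl S A k"
      unfolding \<Phi>_def using window by blast
  qed
  then show ?thesis by blast
qed

lemma closure_if_approximable_on_windows:
  fixes y :: seq
  assumes "\<And>k::nat. \<exists>a\<in>X. \<forall>j. \<bar>j\<bar> \<le> int k \<longrightarrow> a j = y j"
  shows "y \<in> closure X"
  unfolding closure_iff_nhds_not_empty
proof (intro allI impI)
  fix B U assume UB: "U \<subseteq> B" and "open U" and "y \<in> U"
  then have "openin (product_topology (\<lambda>i. euclidean) UNIV) U" by (simp add: open_fun_def)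
  from product_topology_open_contains_basis[OF this \<open>y \<in> U\<close>] obtain Z where
    Z: "y \<in> Pi\<^sub>E UNIV Z" "finite {i. Z i \<noteq> topspace euclidean}" "Pi\<^sub>E UNIV Z \<subseteq> U"
    by blast
  define F where "F = {i. Z i \<noteq> UNIV}"
  have "finite F" using Z(2) by (simp add: F_def)
  define k where "k = nat (Max (insert 0 (abs ` F)))"
  have kF: "\<bar>i\<bar> \<le> int k" if "i \<in> F" for i
  proof -
    have "\<bar>i\<bar> \<le> Max (insert 0 (abs ` F))" "0 \<le> Max (insert 0 (abs ` F))"
      using \<open>finite F\<close> that by (intro Max_ge; simp)+
    then show ?thesis unfolding k_def by simp
  qed
  obtain a where a: "a \<in> X" "\<forall>j. \<bar>j\<bar> \<le> int k \<longrightarrow> a j = y j" using assms by blast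
  have "a i \<in> Z i" for i
  proof (cases "i \<in> F")
    case True
    then show ?thesis using a(2) kF Z(1) by (auto simp: PiE_iff)
  next
    case False
    then show ?thesis by (simp add: F_def)
  qed
  then have "a \<in> Pi\<^sub>E UNIV Z" by (simp add: PiE_iff)
  then show "X \<inter> B \<noteq> {}" using a(1) Z(3) UB by blast
qed

lemma Inter_diff_cyl_subset_frontier: "(\<Inter>k. diff_cyl S A k) \<subseteq> closure A \<inter> closure (S - A)"
proof
  fix y assume "y \<in> (\<Inter>k. diff_cyl S A k)"
  then have d: "\<And>k. y \<in> S \<and> cyl S k y \<inter> A \<noteq> {} \<and> \<not> cyl S k y \<subseteq> A"
    using mem_diff_cyl_iff by blast
  have "\<exists>a\<in>A. \<forall>j. \<bar>j\<bar> \<le> int k \<longrightarrow> a j = y j" for k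
  proof -
    obtain a where "a \<in> cyl S k y" "a \<in> A" using d[of k] by blast
    then show ?thesis by (auto simp: cyl_def)
  qed
  moreover have "\<exists>a\<in>S - A. \<forall>j. \<bar>j\<bar> \<le> int k \<longrightarrow> a j = y j" for k
  proof -
    obtain a where "a \<in> cyl S k y" "a \<notin> A" using d[of k] by blast
    then show ?thesis by (auto simp: cyl_def)
  qed
  ultimately show "y \<in> closure A \<inter> closure (S - A)"
    using closure_if_approximable_on_windows by blast
qed

section \<open>Invariant measures on the subshift from orbit segments\<close>

definition emp_freq :: "seq \<Rightarrow> nat \<Rightarrow> (seq \<Rightarrow> bool) \<Rightarrow> real" where
  "emp_freq x k Q = real (card {t\<in>{1..k}. Q ((shift ^^ t) x)}) / real k"

text \<open>The limit construction needs a Polish alphabet; \<open>nat\<close> is not an instance of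
  \<open>polish_space\<close>, so it is run on \<open>nat discrete\<close> and transported back.\<close>

definition undiscrete :: "(int \<Rightarrow> nat discrete) \<Rightarrow> seq" where
  "undiscrete z = (\<lambda>i. of_discrete (z i))"

lemma undiscrete_measurable:
  "undiscrete \<in> measurable (PiM UNIV (\<lambda>_. borel :: nat discrete measure)) (PiM UNIV (\<lambda>_. borel :: nat measure))"
proof -
  have "of_discrete \<in> measurable (borel :: nat discrete measure) (borel :: nat measure)"
    by (rule measurableI) (auto intro: borel_open Discrete_Topology.open_discrete)
  then show ?thesis
    unfolding undiscrete_def
    by (intro measurable_PiM_single') (auto simp: space_PiM intro: measurable_compose[OF measurable_component_singleton])
qed

lemma shift_measurable:
  "shift \<in> measurable (PiM UNIV (\<lambda>_. borel :: nat measure)) (PiM UNIV (\<lambda>_. borel :: nat measure))"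
  unfolding shift_def by (rule measurable_PiM_single') (auto simp: space_PiM)

lemma shift_invariant_limit_of_empirical_measures:
  fixes x :: "nat \<Rightarrow> seq" and \<Sigma> :: "nat set"
  assumes "finite \<Sigma>" "\<And>j i. x j i \<in> \<Sigma>" "\<And>j. 0 < L j" "filterlim L at_top sequentially"
  obtains \<nu> r where "prob_space \<nu>" "sets \<nu> = sets (PiM UNIV (\<lambda>_. borel))" "distr \<nu> \<nu> shift = \<nu>"
    "strict_mono r" "\<And>J \<Phi>. finite J \<Longrightarrow>
       (\<lambda>n. emp_freq (x (r n)) (L (r n)) (\<lambda>y. \<Phi> (restrict y J))) \<longlonglongrightarrow> measure \<nu> {y. \<Phi> (restrict y J)}"
proof -
  interpret K: empirical_measures "discrete ` \<Sigma>" "\<lambda>j i. discrete (x j i)" L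
    using assms by unfold_locales auto
  have undiscrete_meas: "undiscrete \<in> measurable K.lim_measure (PiM UNIV (\<lambda>_. borel))"
    using undiscrete_measurable by (simp add: measurable_cong_sets[OF K.sets_lim_measure refl])
  define \<nu> where "\<nu> = distr K.lim_measure (PiM UNIV (\<lambda>_. borel :: nat measure)) undiscrete"
  have sets_\<nu>: "sets \<nu> = sets (PiM UNIV (\<lambda>_. borel))" by (simp add: \<nu>_def)
  have prob: "prob_space \<nu>"
    unfolding \<nu>_def by (rule prob_space.prob_space_distr[OF K.prob_space_lim_measure undiscrete_meas])
  have invariant: "distr \<nu> \<nu> shift = \<nu>"
  proof -
    have "distr \<nu> \<nu> shift = distr \<nu> (PiM UNIV (\<lambda>_. borel :: nat measure)) shift"
      by (rule distr_cong) (auto simp: sets_\<nu>)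
    also have "\<dots> = distr K.lim_measure (PiM UNIV (\<lambda>_. borel)) (shift \<circ> undiscrete)"
      unfolding \<nu>_def by (rule distr_distr[OF shift_measurable undiscrete_meas])
    also have "shift \<circ> undiscrete = undiscrete \<circ> left_shift"
      by (auto simp: undiscrete_def left_shift_def shift_def)
    also have "distr K.lim_measure (PiM UNIV (\<lambda>_. borel)) (undiscrete \<circ> left_shift) =
        distr (distr K.lim_measure K.lim_measure left_shift) (PiM UNIV (\<lambda>_. borel)) undiscrete"
      by (rule distr_distr[OF undiscrete_meas K.left_shift_measurable_lim_measure, symmetric])
    finally show ?thesis unfolding K.lim_measure_shift_invariant \<nu>_def .
  qed
  have lim: "(\<lambda>n. emp_freq (x (K.subseq n)) (L (K.subseq n)) (\<lambda>y. \<Phi> (restrict y J)))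
      \<longlonglongrightarrow> measure \<nu> {y. \<Phi> (restrict y J)}" if J: "finite J" for J \<Phi>
  proof -
    define \<Phi>' where "\<Phi>' u = \<Phi> (restrict (\<lambda>i. of_discrete (u i)) J)" for u :: "int \<Rightarrow> nat discrete"
    have "undiscrete -` {y. \<Phi> (restrict y J)} \<inter> space K.lim_measure = {z. \<Phi>' (restrict z J)}"
      by (auto simp: \<Phi>'_def K.space_lim_measure undiscrete_def restrict_def cong: if_cong)
    then have "measure \<nu> {y. \<Phi> (restrict y J)} = measure K.lim_measure {z. \<Phi>' (restrict z J)}"
      unfolding \<nu>_def using cylinder_event_in_sets_PiM[OF J]
      by (subst measure_distr[OF undiscrete_meas]) auto
    moreover have "K.freq n (\<lambda>y. \<Phi>' (restrict y J)) = emp_freq (x n) (L n) (\<lambda>y. \<Phi> (restrict y J))" for n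
      unfolding K.freq_def emp_freq_def \<Phi>'_def shift_funpow
      by (simp add: discrete_inverse restrict_def cong: if_cong)
    ultimately show ?thesis using K.freq_tendsto_lim_measure[OF J, of \<Phi>'] by simp
  qed
  show ?thesis by (rule that[OF prob sets_\<nu> invariant K.subseq(1) lim])
qed

lemma invariant_prob_restrict_space:
  fixes \<nu> :: "seq measure"
  assumes "prob_space \<nu>" and sets_\<nu>: "sets \<nu> = sets (PiM UNIV (\<lambda>_. borel))"
    and invariant: "distr \<nu> \<nu> shift = \<nu>"
    and S: "S \<in> sets \<nu>" "AE y in \<nu>. y \<in> S" and shift_S: "\<And>y. y \<in> S \<Longrightarrow> shift y \<in> S"
  shows "invariant_prob S (restrict_space \<nu> S)"
  unfolding invariant_prob_def borel_prob_on_def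
proof (intro conjI ballI)
  interpret prob_space \<nu> by fact
  have space_\<nu>: "space \<nu> = UNIV" using sets_eq_imp_space_eq[OF sets_\<nu>] by (simp add: space_PiM)
  have shift_meas: "shift \<in> measurable \<nu> \<nu>"
    using shift_measurable by (simp add: measurable_cong_sets[OF sets_\<nu> sets_\<nu>])
  have restrict_eq: "emeasure (restrict_space \<nu> S) B = emeasure \<nu> B" if "B \<subseteq> S" for B
    using that S(1) by (subst emeasure_restrict_space) (auto simp: space_\<nu>)
  have AE_eq: "emeasure \<nu> (S \<inter> B) = emeasure \<nu> B" if "B \<in> sets \<nu>" for B
    by (rule emeasure_eq_AE) (use S that in auto)
  have "emeasure \<nu> S = 1"
    using AE_eq[OF sets.top] sets.sets_into_space[OF S(1)] by (simp add: Int_absorb2 emeasure_space_1)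
  then show "prob_space (restrict_space \<nu> S)"
    using S(1) by (rule prob_space_restrict_space[rotated])
  show "sets (restrict_space \<nu> S) = sets (restrict_space borel S)"
    unfolding sets_restrict_space sets_\<nu> sets_PiM_equal_borel ..
  fix B assume "B \<in> sets (restrict_space \<nu> S)"
  then obtain B' where B': "B' \<in> sets \<nu>" "B = S \<inter> B'"
    unfolding sets_restrict_space by auto
  have "shift -` B' \<in> sets \<nu>"
    using measurable_sets[OF shift_meas B'(1)] by (simp add: space_\<nu>)
  have "shift -` B \<inter> space (restrict_space \<nu> S) = S \<inter> shift -` B'"
    using shift_S S(1) by (auto simp: B'(2) space_restrict_space space_\<nu>)
  then have "emeasure (restrict_space \<nu> S) (shift -` B \<inter> space (restrict_space \<nu> S))
      = emeasure \<nu> (shift -` B')"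
    using restrict_eq AE_eq[OF \<open>shift -` B' \<in> sets \<nu>\<close>] by simp
  also have "\<dots> = emeasure (distr \<nu> \<nu> shift) B'"
    using B'(1) by (simp add: emeasure_distr[OF shift_meas] space_\<nu>)
  also have "\<dots> = emeasure (restrict_space \<nu> S) B"
    unfolding invariant B'(2) using restrict_eq AE_eq[OF B'(1)] by simp
  finally show "emeasure (restrict_space \<nu> S) (shift -` B \<inter> space (restrict_space \<nu> S))
      = emeasure (restrict_space \<nu> S) B" .
qed

lemma SFT_full_measure_if_limit_of_orbit_segments:
  fixes \<nu> :: "seq measure" and x :: "nat \<Rightarrow> seq"
  assumes "prob_space \<nu>" and sets_\<nu>: "sets \<nu> = sets (PiM UNIV (\<lambda>_. borel))"
    and x: "\<And>j. x j \<in> SFT N T" and L_pos: "\<And>j. 0 < L j"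
    and lim: "\<And>J \<Phi>. finite J \<Longrightarrow>
       (\<lambda>n. emp_freq (x n) (L n) (\<lambda>y. \<Phi> (restrict y J))) \<longlonglongrightarrow> measure \<nu> {y. \<Phi> (restrict y J)}"
  shows "SFT N T \<in> sets \<nu>" "AE y in \<nu>. y \<in> SFT N T"
proof -
  interpret prob_space \<nu> by fact
  have cyl_sets: "{y. \<Phi> (restrict y J)} \<in> sets \<nu>" if "finite J" for J \<Phi>
    unfolding sets_\<nu> using that by (rule cylinder_event_in_sets_PiM)
  define \<Psi> where "\<Psi> i u = (u i \<in> {1..N} \<and> T (u i) (u (i+1)))" for i and u :: seq
  have SFT_eq: "SFT N T = (\<Inter>i. {y. \<Psi> i (restrict y {i, i+1})})"
    by (auto simp: SFT_def \<Psi>_def)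
  show "SFT N T \<in> sets \<nu>"
    unfolding SFT_eq using cyl_sets by (intro sets.countable_INT) auto
  text \<open>Every orbit segment stays in \<open>SFT N T\<close>, so each transition constraint has frequency 1.\<close>
  have "AE y in \<nu>. y \<in> {y. \<Psi> i (restrict y {i, i+1})}" for i
  proof (rule AE_prob_1)
    have "emp_freq (x n) (L n) (\<lambda>y. \<Psi> i (restrict y {i, i+1})) = 1" for n
    proof -
      have "{t\<in>{1..L n}. \<Psi> i (restrict ((shift ^^ t) (x n)) {i, i+1})} = {1..L n}"
        using shift_funpow_SFT[OF x] by (auto simp: \<Psi>_def SFT_def)
      then show ?thesis using L_pos[of n] by (simp add: emp_freq_def)
    qed
    then show "prob {y. \<Psi> i (restrict y {i, i+1})} = 1"
      using LIMSEQ_unique[OF lim[of "{i, i+1}"]] by simp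
  qed
  then show "AE y in \<nu>. y \<in> SFT N T" unfolding SFT_eq by (simp add: AE_all_countable)
qed

lemma invariant_prob_from_orbit_segments:
  fixes x :: "nat \<Rightarrow> seq"
  assumes x: "\<And>j. x j \<in> SFT N T" and L_pos: "\<And>j. 0 < L j" and "filterlim L at_top sequentially"
  shows "\<exists>r \<nu>. strict_mono r \<and> invariant_prob (SFT N T) \<nu> \<and> (\<forall>J \<Phi>. finite J \<longrightarrow>
    {y\<in>SFT N T. \<Phi> (restrict y J)} \<in> sets \<nu> \<and>
    (\<lambda>n. emp_freq (x (r n)) (L (r n)) (\<lambda>y. \<Phi> (restrict y J))) \<longlonglongrightarrow> measure \<nu> {y\<in>SFT N T. \<Phi> (restrict y J)})"
proof -
  define S where "S = SFT N T"
  have alphabet: "x j i \<in> {1..N}" for j i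
    using x[of j] by (simp add: SFT_def)
  obtain \<nu> r where \<nu>: "prob_space \<nu>" and sets_\<nu>: "sets \<nu> = sets (PiM UNIV (\<lambda>_. borel))"
    and invariant: "distr \<nu> \<nu> shift = \<nu>" and "strict_mono r"
    and lim: "\<And>J \<Phi>. finite J \<Longrightarrow>
       (\<lambda>n. emp_freq (x (r n)) (L (r n)) (\<lambda>y. \<Phi> (restrict y J))) \<longlonglongrightarrow> measure \<nu> {y. \<Phi> (restrict y J)}"
    using shift_invariant_limit_of_empirical_measures[of "{1..N}" x L, OF finite_atLeastAtMost alphabet assms(2,3)]
    by blast
  interpret prob_space \<nu> by fact
  have cyl_sets: "{y. \<Phi> (restrict y J)} \<in> sets \<nu>" if "finite J" for J \<Phi>
    unfolding sets_\<nu> using that by (rule cylinder_event_in_sets_PiM)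
  have S_sets: "S \<in> sets \<nu>" and AE_S: "AE y in \<nu>. y \<in> S"
    using SFT_full_measure_if_limit_of_orbit_segments[of \<nu> "\<lambda>n. x (r n)" N T "\<lambda>n. L (r n)"]
      \<nu> sets_\<nu> x L_pos lim unfolding S_def by blast+
  then have inv: "invariant_prob S (restrict_space \<nu> S)"
    using \<nu> sets_\<nu> invariant shift_SFT by (intro invariant_prob_restrict_space) (auto simp: S_def)
  have sets_restrict: "{y\<in>S. \<Phi> (restrict y J)} \<in> sets (restrict_space \<nu> S)" if "finite J" for J \<Phi>
    using cyl_sets[OF that] by (auto simp: sets_restrict_space)
  have lim_restrict: "(\<lambda>n. emp_freq (x (r n)) (L (r n)) (\<lambda>y. \<Phi> (restrict y J)))
      \<longlonglongrightarrow> measure (restrict_space \<nu> S) {y\<in>S. \<Phi> (restrict y J)}" if "finite J" for J \<Phi>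
  proof -
    have "measure (restrict_space \<nu> S) {y\<in>S. \<Phi> (restrict y J)} = measure \<nu> (S \<inter> {y. \<Phi> (restrict y J)})"
      using S_sets by (subst measure_restrict_space) (auto intro!: arg_cong2[where f=measure])
    also have "\<dots> = measure \<nu> {y. \<Phi> (restrict y J)}"
      using AE_S S_sets cyl_sets[OF that] by (intro measure_eq_AE) auto
    finally show ?thesis using lim[OF that] by simp
  qed
  show ?thesis
    unfolding S_def[symmetric]
    by (intro exI[of _ r] exI[of _ "restrict_space \<nu> S"] conjI allI impI \<open>strict_mono r\<close> inv
        sets_restrict lim_restrict)
qed

section \<open>Fast returns to \<open>D\<^sub>m\<close>\<close>

lemma ret_iter_enat_ge:
  assumes "ret_iter D n x = enat k"
  shows "n \<le> k"
proof -
  have "card {t\<in>{1..k}. (shift ^^ t) x \<in> D} \<le> card {1..k}" by (intro card_mono) auto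
  then show ?thesis using ret_iter_le_card_visits[OF assms] by simp
qed

lemma inverse_le_emp_freq_if_fast_returns:
  assumes ret: "ret_iter D n x = enat k" and "0 < n" "real k \<le> v * real n" "0 < v"
    and D_Q: "\<And>y. y \<in> D \<Longrightarrow> Q y"
  shows "1 / v \<le> emp_freq x k Q"
proof -
  have "0 < k" using ret_iter_enat_ge[OF ret] \<open>0 < n\<close> by linarith
  have "n \<le> card {t\<in>{1..k}. (shift ^^ t) x \<in> D}" by (rule ret_iter_le_card_visits[OF ret])
  also have "\<dots> \<le> card {t\<in>{1..k}. Q ((shift ^^ t) x)}" using D_Q by (intro card_mono) auto
  finally have visits: "real n \<le> real (card {t\<in>{1..k}. Q ((shift ^^ t) x)})" by simp
  have "1 / v \<le> real n / real k"
    using assms(3,4) \<open>0 < k\<close> by (simp add: field_simps)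
  also have "\<dots> \<le> emp_freq x k Q"
    unfolding emp_freq_def using visits by (simp add: divide_right_mono)
  finally show ?thesis .
qed

lemma frequent_fast_returns_imp_invariant_measure:
  fixes A :: "seq set" and v :: real
  assumes "0 < v"
    and fast_returns: "\<And>j. \<exists>m\<ge>j. \<exists>n>j. \<exists>x\<in>SFT N T. \<exists>k.
      ret_iter (diff_cyl (SFT N T) A m) n x = enat k \<and> real k \<le> v * real n"
  obtains \<nu> where "invariant_prob (SFT N T) \<nu>"
    "\<And>k. diff_cyl (SFT N T) A k \<in> sets \<nu>" "\<And>k. 1 / v \<le> measure \<nu> (diff_cyl (SFT N T) A k)"
proof -
  define D where "D = diff_cyl (SFT N T) A"
  obtain mm nn xx kk where mm: "\<And>j. j \<le> mm j" and nn: "\<And>j. j < nn j" and xx: "\<And>j. xx j \<in> SFT N T"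
    and ret: "\<And>j. ret_iter (D (mm j)) (nn j) (xx j) = enat (kk j)"
    and fast: "\<And>j. real (kk j) \<le> v * real (nn j)"
    using fast_returns unfolding D_def by metis
  have kk_ge: "j \<le> kk j" and kk_pos: "0 < kk j" for j
    using ret_iter_enat_ge[OF ret, of j] nn[of j] by linarith+
  have kk_at_top: "filterlim kk at_top sequentially"
    using kk_ge by (intro filterlim_at_top_mono[OF filterlim_ident]) auto
  obtain r \<nu> where r: "strict_mono r" and inv: "invariant_prob (SFT N T) \<nu>"
    and cylinder_events: "\<forall>J \<Phi>. finite J \<longrightarrow> {y\<in>SFT N T. \<Phi> (restrict y J)} \<in> sets \<nu> \<and>
      (\<lambda>n. emp_freq (xx (r n)) (kk (r n)) (\<lambda>y. \<Phi> (restrict y J)))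
        \<longlonglongrightarrow> measure \<nu> {y\<in>SFT N T. \<Phi> (restrict y J)}"
    using invariant_prob_from_orbit_segments[of xx N T kk, OF xx kk_pos kk_at_top] by (elim exE conjE)
  have "D k \<in> sets \<nu> \<and> 1 / v \<le> measure \<nu> (D k)" for k
  proof -
    obtain \<Phi> where \<Phi>: "D k = {y\<in>SFT N T. \<Phi> (restrict y {-int k..int k})}"
      using diff_cyl_eq_cylinder_event[of "SFT N T" A k] unfolding D_def by (elim exE)
    have "D k \<in> sets \<nu>"
      and lim: "(\<lambda>n. emp_freq (xx (r n)) (kk (r n)) (\<lambda>y. \<Phi> (restrict y {-int k..int k})))
        \<longlonglongrightarrow> measure \<nu> (D k)"
      using cylinder_events[rule_format, of "{-int k..int k}" \<Phi>] unfolding \<Phi> by auto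
    text \<open>For \<open>n \<ge> k\<close>, the returns counted by \<open>nn (r n)\<close> are visits to \<open>D (mm (r n)) \<subseteq> D k\<close>.\<close>
    have "1 / v \<le> emp_freq (xx (r n)) (kk (r n)) (\<lambda>y. \<Phi> (restrict y {-int k..int k}))"
      if "k \<le> n" for n
    proof (rule inverse_le_emp_freq_if_fast_returns[OF ret _ fast \<open>0 < v\<close>])
      show "0 < nn (r n)" using nn[of "r n"] by linarith
      have "k \<le> mm (r n)" using that seq_suble[OF r, of n] mm[of "r n"] by linarith
      then have "D (mm (r n)) \<subseteq> D k" using decseq_diff_cyl unfolding D_def decseq_def by blast
      then show "\<Phi> (restrict y {-int k..int k})" if "y \<in> D (mm (r n))" for y
        using that unfolding \<Phi> by blast
    qed
    then have "1 / v \<le> measure \<nu> (D k)"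
      by (intro LIMSEQ_le_const[OF lim]) blast
    with \<open>D k \<in> sets \<nu>\<close> show ?thesis by simp
  qed
  then show ?thesis using that[OF inv] unfolding D_def by blast
qed

lemma frequent_fast_returns_imp_frontier_charged:
  fixes A :: "seq set" and v :: real
  assumes "A \<subseteq> SFT N T" "0 < v"
    and "\<And>j. \<exists>m\<ge>j. \<exists>n>j. \<exists>x\<in>SFT N T. \<exists>k.
      ret_iter (diff_cyl (SFT N T) A m) n x = enat k \<and> real k \<le> v * real n"
  obtains \<nu> where "invariant_prob (SFT N T) \<nu>"
    "1 / v \<le> measure \<nu> (closure A \<inter> closure (SFT N T - A))"
proof -
  define D where "D = diff_cyl (SFT N T) A"
  obtain \<nu> where inv: "invariant_prob (SFT N T) \<nu>"
    and D_sets: "\<And>k. D k \<in> sets \<nu>" and D_measure: "\<And>k. 1 / v \<le> measure \<nu> (D k)"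
    using frequent_fast_returns_imp_invariant_measure[OF assms(2,3)] unfolding D_def by blast
  have "prob_space \<nu>" and sets_\<nu>: "sets \<nu> = sets (restrict_space borel (SFT N T))"
    using inv by (simp_all add: invariant_prob_def borel_prob_on_def)
  interpret prob_space \<nu> by fact
  have "range D \<subseteq> sets \<nu>" using D_sets by blast
  moreover have "decseq D" unfolding D_def by (rule decseq_diff_cyl)
  ultimately have "(\<lambda>k. measure \<nu> (D k)) \<longlonglongrightarrow> measure \<nu> (\<Inter>k. D k)"
    by (rule finite_Lim_measure_decseq)
  then have "1 / v \<le> measure \<nu> (\<Inter>k. D k)"
    by (rule LIMSEQ_le_const) (use D_measure in blast)
  also have "\<dots> \<le> measure \<nu> (closure A \<inter> closure (SFT N T - A))"
  proof (rule finite_measure_mono)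
    show "(\<Inter>k. D k) \<subseteq> closure A \<inter> closure (SFT N T - A)"
      unfolding D_def by (rule Inter_diff_cyl_subset_frontier)
    have "closure A \<inter> closure (SFT N T - A) \<subseteq> SFT N T"
      using closure_minimal[OF assms(1) closed_SFT] by blast
    moreover have "closure A \<inter> closure (SFT N T - A) \<in> sets borel"
      by (rule borel_closed) (intro closed_Int closed_closure)
    ultimately show "closure A \<inter> closure (SFT N T - A) \<in> sets \<nu>"
      unfolding sets_\<nu> sets_restrict_space by (metis Int_absorb1 image_eqI)
  qed
  finally show ?thesis by (rule that[OF inv])
qed

lemma eventually_no_fast_returns:
  fixes A :: "seq set" and v :: real
  assumes "A \<subseteq> SFT N T" "0 < v"
    and "\<forall>\<nu>. invariant_prob (SFT N T) \<nu> \<longrightarrow> measure \<nu> (closure A \<inter> closure (SFT N T - A)) = 0"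
  shows "\<exists>M. \<forall>m\<ge>M. \<forall>\<^sub>F n in sequentially. \<forall>x\<in>SFT N T. \<forall>k.
           ret_iter (diff_cyl (SFT N T) A m) n x = enat k \<longrightarrow> v * real n < real k"
proof (rule ccontr)
  assume contra: "\<not> ?thesis"
  have "\<exists>m\<ge>j. \<exists>n>j. \<exists>x\<in>SFT N T. \<exists>k.
      ret_iter (diff_cyl (SFT N T) A m) n x = enat k \<and> real k \<le> v * real n" for j
  proof -
    obtain m where "j \<le> m" and "\<not> (\<forall>\<^sub>F n in sequentially. \<forall>x\<in>SFT N T. \<forall>k.
        ret_iter (diff_cyl (SFT N T) A m) n x = enat k \<longrightarrow> v * real n < real k)"
      using contra by blast
    then obtain n where "Suc j \<le> n" and "\<not> (\<forall>x\<in>SFT N T. \<forall>k.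
        ret_iter (diff_cyl (SFT N T) A m) n x = enat k \<longrightarrow> v * real n < real k)"
      unfolding eventually_sequentially by blast
    then show ?thesis using \<open>j \<le> m\<close> by (auto simp: not_less Suc_le_eq)
  qed
  then obtain \<nu> where "invariant_prob (SFT N T) \<nu>"
    "1 / v \<le> measure \<nu> (closure A \<inter> closure (SFT N T - A))"
    by (rule frequent_fast_returns_imp_frontier_charged[OF assms(1,2)])
  then show False using assms(2,3) by fastforce
qed

theorem proposition6p2:
  fixes N :: nat and T :: "nat \<Rightarrow> nat \<Rightarrow> bool" and \<phi> :: "seq \<Rightarrow> real"
    and \<mu> :: "seq measure" and A :: "seq set"
  assumes "N \<ge> 1"
    and "mixing_matrix N T"
    and "holder_on (SFT N T) \<phi>"
    and "equilibrium_state (SFT N T) \<phi> \<mu>"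
    and "\<forall>\<nu>. equilibrium_state (SFT N T) \<phi> \<nu> \<longrightarrow> \<nu> = \<mu>"
    and "A \<subseteq> SFT N T" and "openin (top_of_set (SFT N T)) A"
    and "\<forall>\<nu>. invariant_prob (SFT N T) \<nu> \<longrightarrow>
           measure \<nu> (closure A \<inter> closure (SFT N T - A)) = 0"
  shows "\<forall>v>0. \<exists>M. \<forall>m\<ge>M.
           (log_rate \<mu> (diff_cyl (SFT N T) A m) v \<longlongrightarrow> -\<infinity>) sequentially"
proof (intro allI impI)
  fix v :: real assume "v > 0"
  obtain M where M: "\<forall>m\<ge>M. \<forall>\<^sub>F n in sequentially. \<forall>x\<in>SFT N T. \<forall>k.
      ret_iter (diff_cyl (SFT N T) A m) n x = enat k \<longrightarrow> v * real n < real k"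
    using eventually_no_fast_returns[OF assms(6) \<open>v > 0\<close> assms(8)] by blast
  have "space \<mu> = SFT N T"
    using assms(4) sets_eq_imp_space_eq[of \<mu> "restrict_space borel (SFT N T)"]
    by (simp add: equilibrium_state_def invariant_prob_def borel_prob_on_def space_restrict_space)
  have "\<forall>\<^sub>F n in sequentially. log_rate \<mu> (diff_cyl (SFT N T) A m) v n = -\<infinity>" if "M \<le> m" for m
    using M[rule_format, OF that] eventually_gt_at_top[of 0]
  proof eventually_elim
    case (elim n)
    then have empty: "{x\<in>space \<mu>. \<exists>k. ret_iter (diff_cyl (SFT N T) A m) n x = enat k
        \<and> real k / real n \<le> v} = {}"
      using \<open>space \<mu> = SFT N T\<close> by (auto simp: divide_le_eq mult.commute)
    show ?case unfolding log_rate_def Let_def empty by simp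
  qed
  then show "\<exists>M. \<forall>m\<ge>M. (log_rate \<mu> (diff_cyl (SFT N T) A m) v \<longlongrightarrow> -\<infinity>) sequentially"
    by (auto intro: tendsto_eventually)
qed

end
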